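(* (Subject expansion.) If $\Gamma\vdash t_2:\sigma$ is derivable in $\cap J$ and $t_1\to_{d\beta} t_2$ is a non-erasing step, then $\Gamma\vdash t_1:\sigma$ is derivable in $\cap J$.
   Context: Terms $\mathtt T_J$: $t,u,r ::= x \mid \lambda x.t \mid t(u,y.r)$ ($y$ bound in $r$), up to $\alpha$-equivalence; $\{u/x\}t$ capture-avoiding substitution. List contexts $\mathtt D ::= \Diamond \mid t(u,y.\mathtt D)$. Distant beta: $\mathtt D\langle\lambda x.t\rangle(u,y.r) \mapsto_{d\beta} \{\{u/x\}\mathtt D\langle t\rangle/y\}r$ (variables bound by $\mathtt D$ not free in $u$, $x$ not in $\mathtt D$), $\to_{d\beta}$ its closure under all contexts. A step is non-erasing if the contracted redex $\mathtt D\langle\lambda x.t\rangle(u,y.r)$ satisfies $x\in\mathrm{fv}(t)$ and $y\in\mathrm{fv}(r)$. System $\cap J$: types $\sigma,\tau ::= \alpha \mid \mathcal M\to\sigma$, $\mathcal M=[\sigma_i]_{i\in I}$ a finite possibly empty multiset; $\sqcup$ multiset union; environments map variables to multisets, $\wedge$ pointwise union, $\Gamma;x:\mathcal M$ extension with $x\notin\mathrm{dom}\,\Gamma$. $\mathrm{ch}(\mathcal M)=\mathcal M$ if $\mathcal M\ne[\,]$, $\mathrm{ch}([\,])=[\tau]$ for an arbitrary $\tau$. Rules: (var) $x:[\sigma]\vdash x:\sigma$; (abs) from $\Gamma;x:\mathcal M\vdash t:\sigma$ infer $\Gamma\vdash\lambda x.t:\mathcal M\to\sigma$; (many) from $(\Gamma_i\vdash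 t:\sigma_i)_{i\in I}$, $I\ne\emptyset$, infer $\wedge_i\Gamma_i\vdash t:[\sigma_i]_{i\in I}$; (app) from $\Gamma\vdash t:\mathrm{ch}([\mathcal M_i\to\tau_i]_{i\in I})$, $\Delta\vdash u:\mathrm{ch}(\sqcup_i\mathcal M_i)$, $\Lambda;y:[\tau_i]_{i\in I}\vdash r:\sigma$ infer $\Gamma\wedge\Delta\wedge\Lambda\vdash t(u,y.r):\sigma$. *)

theory Defs
  imports Main "HOL-Library.Multiset"
begin

text \<open>App t u r stands for t(u,y.r); the variable y (index 0) is bound in r.\<close>
datatype trm = Var nat | Lam trm | App trm trm trm

fun lift :: "nat \<Rightarrow> trm \<Rightarrow> trm" where
  "lift k (Var i) = (if i < k then Var i else Var (Suc i))"
| "lift k (Lam t) = Lam (lift (Suc k) t)"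
| "lift k (App t u r) = App (lift k t) (lift k u) (lift (Suc k) r)"

definition liftn :: "nat \<Rightarrow> trm \<Rightarrow> trm" where
  "liftn m u = (lift 0 ^^ m) u"

fun subst :: "trm \<Rightarrow> nat \<Rightarrow> trm \<Rightarrow> trm" where
  "subst (Var i) k s = (if i < k then Var i else if i = k then s else Var (i - 1))"
| "subst (Lam t) k s = Lam (subst t (Suc k) (lift 0 s))"
| "subst (App t u r) k s = App (subst t k s) (subst u k s) (subst r (Suc k) (lift 0 s))"

fun loose :: "nat \<Rightarrow> trm \<Rightarrow> bool" where
  "loose n (Var i) = (i = n)"
| "loose n (Lam t) = loose (Suc n) t"
| "loose n (App t u r) = (loose n t \<or> loose n u \<or> loose (Suc n) r)"

datatype lctx = Hole | DApp trm trm lctx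

fun plug :: "lctx \<Rightarrow> trm \<Rightarrow> trm" where
  "plug Hole s = s"
| "plug (DApp t u D) s = App t u (plug D s)"

fun depth :: "lctx \<Rightarrow> nat" where
  "depth Hole = 0"
| "depth (DApp t u D) = Suc (depth D)"

text \<open>Non-erasing distant beta step, closed under all contexts:
  D<\<lambda>x.t>(u,y.r) \<mapsto> {{u/x}D<t>/y}r with x \<in> fv t and y \<in> fv r.
  The bound variables of D do not capture u (u is lifted over them).\<close>
inductive ne_dbeta :: "trm \<Rightarrow> trm \<Rightarrow> bool" where
  root: "loose 0 t \<Longrightarrow> loose 0 r \<Longrightarrow>
     ne_dbeta (App (plug D (Lam t)) u r)
              (subst r 0 (plug D (subst t 0 (liftn (depth D) u))))"
| lam: "ne_dbeta t t' \<Longrightarrow> ne_dbeta (Lam t) (Lam t')"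
| app1: "ne_dbeta t t' \<Longrightarrow> ne_dbeta (App t u r) (App t' u r)"
| app2: "ne_dbeta u u' \<Longrightarrow> ne_dbeta (App t u r) (App t u' r)"
| app3: "ne_dbeta r r' \<Longrightarrow> ne_dbeta (App t u r) (App t u r')"

datatype ty = TVar nat | Arr "ty multiset" ty

type_synonym env = "nat \<Rightarrow> ty multiset"

definition env_single :: "nat \<Rightarrow> ty \<Rightarrow> env" where
  "env_single n \<sigma> = (\<lambda>x. if x = n then {#\<sigma>#} else {#})"

definition env_union :: "env \<Rightarrow> env \<Rightarrow> env" where
  "env_union \<Gamma> \<Delta> = (\<lambda>x. \<Gamma> x + \<Delta> x)"

definition env_ext :: "ty multiset \<Rightarrow> env \<Rightarrow> env" where
  "env_ext M \<Gamma> = (\<lambda>n. case n of 0 \<Rightarrow> M | Suc k \<Rightarrow> \<Gamma> k)"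

text \<open>ch M, with the arbitrary type \<tau> made an explicit parameter.\<close>
definition ch :: "ty multiset \<Rightarrow> ty \<Rightarrow> ty multiset" where
  "ch M \<tau> = (if M = {#} then {#\<tau>#} else M)"

inductive cj_typing :: "env \<Rightarrow> trm \<Rightarrow> ty \<Rightarrow> bool"
  and cj_mtyping :: "env \<Rightarrow> trm \<Rightarrow> ty multiset \<Rightarrow> bool" where
  T_var: "cj_typing (env_single n \<sigma>) (Var n) \<sigma>"
| T_abs: "cj_typing (env_ext M \<Gamma>) t \<sigma> \<Longrightarrow> cj_typing \<Gamma> (Lam t) (Arr M \<sigma>)"
| T_many: "ps \<noteq> [] \<Longrightarrow> (\<forall>i<length ps. cj_typing (fst (ps ! i)) t (snd (ps ! i))) \<Longrightarrow>
     cj_mtyping (\<lambda>x. sum_list (map (\<lambda>p. fst p x) ps)) t (mset (map snd ps))"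
| T_app: "cj_mtyping \<Gamma> t (ch (mset (map (\<lambda>(M, \<tau>). Arr M \<tau>) ps)) \<tau>0) \<Longrightarrow>
     cj_mtyping \<Delta> u (ch (sum_list (map fst ps)) \<tau>1) \<Longrightarrow>
     cj_typing (env_ext (mset (map snd ps)) \<Lambda>) r \<sigma> \<Longrightarrow>
     cj_typing (env_union \<Gamma> (env_union \<Delta> \<Lambda>)) (App t u r) \<sigma>"

end

theory Submission
  imports Defs
begin

text \<open>
  The contextual cases are immediate because typings of subterms combine compositionally.
  The substance is the root step. An anti-substitution lemma splits a typing of a
  substitution instance \<open>{s/x}t\<close> into a typing of \<open>t\<close> with \<open>x : M\<close> and a multi-typing of
  \<open>s\<close> by \<open>M\<close>, where \<open>M\<close> may be empty. Typing is relevant (a free variable of a typed term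
  gets a nonempty multiset), so for a non-erasing step both multisets \<open>M\<close> arising at the
  two substitutions are nonempty; then the (abs), (many) and (app) rules rebuild a typing
  of the redex \<open>D\<langle>\<lambda>x.t\<rangle>(u,y.r)\<close>, descending through the list context \<open>D\<close> and stripping
  the liftings of \<open>u\<close> over its binders.
\<close>

inductive_cases cj_typing_VarE: "cj_typing \<Gamma> (Var n) \<tau>"
inductive_cases cj_typing_LamE: "cj_typing \<Gamma> (Lam t) \<tau>"
inductive_cases cj_typing_AppE: "cj_typing \<Gamma> (App t u r) \<tau>"
inductive_cases cj_mtypingE: "cj_mtyping \<Gamma> t N"

lemma cj_typing_Var_iff: "cj_typing \<Gamma> (Var n) \<tau> \<longleftrightarrow> \<Gamma> = env_single n \<tau>"
  by (auto elim: cj_typing_VarE intro: T_var)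

lemma env_ext_simps [simp]:
  "env_ext M \<Gamma> 0 = M"
  "env_ext M \<Gamma> (Suc k) = \<Gamma> k"
  by (simp_all add: env_ext_def)

lemma env_ext_eta: "env_ext (\<Gamma> 0) (\<Gamma> \<circ> Suc) = \<Gamma>"
  by (auto simp: env_ext_def fun_eq_iff split: nat.split)

lemma env_union_eq_empty_iff [simp]:
  "env_union \<Gamma> \<Delta> k = {#} \<longleftrightarrow> \<Gamma> k = {#} \<and> \<Delta> k = {#}"
  by (simp add: env_union_def)

lemma env_ext_eq_env_unionD:
  assumes "env_ext M \<Gamma> = env_union \<Gamma>1 \<Gamma>2"
  shows "M = \<Gamma>1 0 + \<Gamma>2 0" and "\<Gamma> = env_union (\<Gamma>1 \<circ> Suc) (\<Gamma>2 \<circ> Suc)"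
  using fun_cong[OF assms, of 0] fun_cong[OF assms, of "Suc _"]
  by (auto simp: env_union_def)

lemma cj_mtyping_single: "cj_typing \<Gamma> t \<tau> \<Longrightarrow> cj_mtyping \<Gamma> t {#\<tau>#}"
  using T_many[of "[(\<Gamma>, \<tau>)]" t] by simp

lemma cj_mtyping_union:
  assumes "cj_mtyping \<Gamma>1 t N1" and "cj_mtyping \<Gamma>2 t N2"
  shows "cj_mtyping (env_union \<Gamma>1 \<Gamma>2) t (N1 + N2)"
proof -
  obtain ps qs where
    ps: "ps \<noteq> []" "\<forall>i<length ps. cj_typing (fst (ps ! i)) t (snd (ps ! i))"
      "\<Gamma>1 = (\<lambda>x. sum_list (map (\<lambda>p. fst p x) ps))" "N1 = mset (map snd ps)" and
    qs: "\<forall>i<length qs. cj_typing (fst (qs ! i)) t (snd (qs ! i))"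
      "\<Gamma>2 = (\<lambda>x. sum_list (map (\<lambda>p. fst p x) qs))" "N2 = mset (map snd qs)"
    using assms by (auto elim!: cj_mtypingE)
  have "cj_mtyping (\<lambda>x. sum_list (map (\<lambda>p. fst p x) (ps @ qs))) t (mset (map snd (ps @ qs)))"
    using ps qs by (intro T_many) (auto simp: nth_append)
  then show ?thesis
    using ps qs by (simp add: env_union_def)
qed

lemma cj_mtyping_induct [consumes 1, case_names single union]:
  assumes "cj_mtyping \<Gamma> t N"
    and single: "\<And>\<Gamma> \<tau>. cj_typing \<Gamma> t \<tau> \<Longrightarrow> P \<Gamma> {#\<tau>#}"
    and union: "\<And>\<Gamma>1 \<Gamma>2 N1 N2. P \<Gamma>1 N1 \<Longrightarrow> P \<Gamma>2 N2 \<Longrightarrow> P (env_union \<Gamma>1 \<Gamma>2) (N1 + N2)"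
  shows "P \<Gamma> N"
proof -
  obtain ps where ps: "ps \<noteq> []" "\<forall>p\<in>set ps. cj_typing (fst p) t (snd p)"
    "\<Gamma> = (\<lambda>x. sum_list (map (\<lambda>p. fst p x) ps))" "N = mset (map snd ps)"
    using assms(1) by (auto elim!: cj_mtypingE simp: all_set_conv_all_nth)
  have "P (\<lambda>x. sum_list (map (\<lambda>p. fst p x) ps)) (mset (map snd ps))"
    using ps(1,2)
  proof (induction ps)
    case Nil
    then show ?case by simp
  next
    case (Cons p ps)
    then have "P (fst p) {#snd p#}"
      by (simp add: single)
    with Cons show ?case
      using union[of "fst p" "{#snd p#}"] by (cases "ps = []") (auto simp: env_union_def)
  qed
  with ps show ?thesis by simp
qed

lemma cj_mtyping_nonempty: "cj_mtyping \<Gamma> t N \<Longrightarrow> N \<noteq> {#}"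
  by (induction rule: cj_mtyping_induct) auto

lemma cj_mtyping_transfer:
  assumes "\<And>\<Gamma> \<tau>. cj_typing \<Gamma> s \<tau> \<Longrightarrow> cj_typing \<Gamma> t \<tau>" and "cj_mtyping \<Gamma> s N"
  shows "cj_mtyping \<Gamma> t N"
  using assms(2) by (induction rule: cj_mtyping_induct) (auto intro: assms(1) cj_mtyping_single cj_mtyping_union)

lemma sum_list_mset_eq_empty_iff: "sum_list Ms = {#} \<longleftrightarrow> (\<forall>M\<in>set Ms. M = {#})"
  by (induction Ms) auto

lemma cj_typing_loose_nonempty:
  assumes "cj_typing \<Gamma> t \<tau>" and "loose n t"
  shows "\<Gamma> n \<noteq> {#}"
proof -
  have "(cj_typing \<Gamma> t \<tau> \<longrightarrow> (\<forall>n. loose n t \<longrightarrow> \<Gamma> n \<noteq> {#})) \<and>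
        (cj_mtyping \<Gamma> t N \<longrightarrow> (\<forall>n. loose n t \<longrightarrow> \<Gamma> n \<noteq> {#}))" for N
  proof (induction rule: cj_typing_cj_mtyping.induct)
    case (T_many ps t)
    then have "fst (ps ! 0) n \<noteq> {#}" and "ps ! 0 \<in> set ps" if "loose n t" for n
      using that by auto
    then show ?case
      by (auto simp: sum_list_mset_eq_empty_iff)
  qed (auto simp: env_single_def env_union_def)
  with assms show ?thesis by blast
qed

subsection \<open>Strengthening\<close>

definition env_drop :: "nat \<Rightarrow> env \<Rightarrow> env" where
  "env_drop k \<Gamma> = (\<lambda>i. if i < k then \<Gamma> i else \<Gamma> (Suc i))"

lemma env_drop_0: "env_drop 0 \<Gamma> = \<Gamma> \<circ> Suc"
  by (simp add: env_drop_def fun_eq_iff)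

lemma env_drop_union [simp]: "env_drop k (env_union \<Gamma> \<Delta>) = env_union (env_drop k \<Gamma>) (env_drop k \<Delta>)"
  by (simp add: env_drop_def env_union_def fun_eq_iff)

lemma env_drop_Suc_ext [simp]: "env_drop (Suc k) (env_ext M \<Gamma>) = env_ext M (env_drop k \<Gamma>)"
  by (auto simp: env_drop_def env_ext_def fun_eq_iff split: nat.split)

lemma cj_mtyping_lift_inv_of_typing:
  assumes "\<And>\<Gamma> \<tau>. cj_typing \<Gamma> (lift k v) \<tau> \<Longrightarrow> \<Gamma> k = {#} \<and> cj_typing (env_drop k \<Gamma>) v \<tau>"
    and "cj_mtyping \<Gamma> (lift k v) N"
  shows "\<Gamma> k = {#} \<and> cj_mtyping (env_drop k \<Gamma>) v N"
  using assms(2) by (induction rule: cj_mtyping_induct) (auto dest: assms(1) intro: cj_mtyping_single cj_mtyping_union)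

lemma cj_typing_lift_inv:
  "cj_typing \<Gamma> (lift k v) \<tau> \<Longrightarrow> \<Gamma> k = {#} \<and> cj_typing (env_drop k \<Gamma>) v \<tau>"
proof (induction v arbitrary: \<Gamma> k \<tau>)
  case (Var i)
  then show ?case
    by (auto simp: cj_typing_Var_iff env_drop_def env_single_def fun_eq_iff split: if_splits)
next
  case (Lam v)
  from Lam.prems obtain M \<sigma> where "\<tau> = Arr M \<sigma>" "cj_typing (env_ext M \<Gamma>) (lift (Suc k) v) \<sigma>"
    by (auto elim: cj_typing_LamE)
  with Lam.IH[of "env_ext M \<Gamma>" "Suc k" \<sigma>] show ?case
    by (auto intro: T_abs)
next
  case (App a b c)
  from App.prems obtain \<Gamma>a \<Delta> \<Lambda> ps \<tau>0 \<tau>1 where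
    \<Gamma>: "\<Gamma> = env_union \<Gamma>a (env_union \<Delta> \<Lambda>)"
    and "cj_mtyping \<Gamma>a (lift k a) (ch (mset (map (\<lambda>(M, \<tau>). Arr M \<tau>) ps)) \<tau>0)"
    and "cj_mtyping \<Delta> (lift k b) (ch (sum_list (map fst ps)) \<tau>1)"
    and "cj_typing (env_ext (mset (map snd ps)) \<Lambda>) (lift (Suc k) c) \<tau>"
    by (auto elim: cj_typing_AppE)
  note a = cj_mtyping_lift_inv_of_typing[OF App.IH(1) this(2)]
    and b = cj_mtyping_lift_inv_of_typing[OF App.IH(2) this(3)]
    and c = App.IH(3)[OF this(4)]
  show ?case
    using a b c \<Gamma> by (auto intro: T_app)
qed

lemma cj_mtyping_lift_inv:
  "cj_mtyping \<Gamma> (lift k v) N \<Longrightarrow> \<Gamma> k = {#} \<and> cj_mtyping (env_drop k \<Gamma>) v N"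
  using cj_mtyping_lift_inv_of_typing cj_typing_lift_inv by blast

subsection \<open>Anti-substitution\<close>

definition env_ins :: "nat \<Rightarrow> ty multiset \<Rightarrow> env \<Rightarrow> env" where
  "env_ins k M \<Gamma> = (\<lambda>i. if i < k then \<Gamma> i else if i = k then M else \<Gamma> (i - 1))"

lemma env_ins_0: "env_ins 0 M \<Gamma> = env_ext M \<Gamma>"
  by (auto simp: env_ins_def env_ext_def fun_eq_iff split: nat.split)

lemma env_ins_Suc: "env_ins (Suc k) M \<Gamma> = env_ext (\<Gamma> 0) (env_ins k M (\<Gamma> \<circ> Suc))"
  by (auto simp: env_ins_def env_ext_def fun_eq_iff split: nat.split)

lemma env_ins_union:
  "env_ins k (M1 + M2) (env_union \<Gamma>1 \<Gamma>2) = env_union (env_ins k M1 \<Gamma>1) (env_ins k M2 \<Gamma>2)"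
  by (auto simp: env_ins_def env_union_def)

text \<open>Rule (many) with the index set allowed to be empty: the type a substituted term
  receives for a variable with no typed occurrence.\<close>

definition cj_mtyping0 :: "env \<Rightarrow> trm \<Rightarrow> ty multiset \<Rightarrow> bool" where
  "cj_mtyping0 \<Delta> s M \<longleftrightarrow> (if M = {#} then \<Delta> = (\<lambda>_. {#}) else cj_mtyping \<Delta> s M)"

lemma cj_mtyping0_empty: "cj_mtyping0 (\<lambda>_. {#}) s {#}"
  by (simp add: cj_mtyping0_def)

lemma cj_mtyping0_union:
  "cj_mtyping0 \<Delta>1 s M1 \<Longrightarrow> cj_mtyping0 \<Delta>2 s M2 \<Longrightarrow> cj_mtyping0 (env_union \<Delta>1 \<Delta>2) s (M1 + M2)"
  using cj_mtyping_union[of \<Delta>1 s M1 \<Delta>2 M2]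
  by (cases "M1 = {#}"; cases "M2 = {#}") (auto simp: cj_mtyping0_def env_union_def)

lemma cj_mtyping0_lift0_inv:
  "cj_mtyping0 \<Delta> (lift 0 s) M \<Longrightarrow> \<Delta> 0 = {#} \<and> cj_mtyping0 (\<Delta> \<circ> Suc) s M"
  using cj_mtyping_lift_inv[of \<Delta> 0 s M] by (auto simp: cj_mtyping0_def env_drop_0)

lemma cj_mtyping_subst_inv_of_typing:
  assumes "\<And>\<Gamma> \<tau>. cj_typing \<Gamma> (subst t k s) \<tau> \<Longrightarrow>
      \<exists>M \<Gamma>' \<Delta>. cj_typing (env_ins k M \<Gamma>') t \<tau> \<and> cj_mtyping0 \<Delta> s M \<and> \<Gamma> = env_union \<Gamma>' \<Delta>"
    and "cj_mtyping \<Gamma> (subst t k s) N"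
  shows "\<exists>M \<Gamma>' \<Delta>. cj_mtyping (env_ins k M \<Gamma>') t N \<and> cj_mtyping0 \<Delta> s M \<and> \<Gamma> = env_union \<Gamma>' \<Delta>"
  using assms(2)
proof (induction rule: cj_mtyping_induct)
  case (single \<Gamma> \<tau>)
  then show ?case
    using assms(1) cj_mtyping_single by blast
next
  case (union \<Gamma>1 \<Gamma>2 N1 N2)
  then obtain M1 \<Gamma>1' \<Delta>1 M2 \<Gamma>2' \<Delta>2 where
    "cj_mtyping (env_ins k M1 \<Gamma>1') t N1" "cj_mtyping0 \<Delta>1 s M1" "\<Gamma>1 = env_union \<Gamma>1' \<Delta>1" and
    "cj_mtyping (env_ins k M2 \<Gamma>2') t N2" "cj_mtyping0 \<Delta>2 s M2" "\<Gamma>2 = env_union \<Gamma>2' \<Delta>2"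
    by blast
  then have "cj_mtyping (env_ins k (M1 + M2) (env_union \<Gamma>1' \<Gamma>2')) t (N1 + N2)"
    and "cj_mtyping0 (env_union \<Delta>1 \<Delta>2) s (M1 + M2)"
    by (simp_all add: env_ins_union cj_mtyping_union cj_mtyping0_union)
  moreover have "env_union \<Gamma>1 \<Gamma>2 = env_union (env_union \<Gamma>1' \<Gamma>2') (env_union \<Delta>1 \<Delta>2)"
    using \<open>\<Gamma>1 = _\<close> \<open>\<Gamma>2 = _\<close> by (simp add: env_union_def fun_eq_iff add_ac)
  ultimately show ?case by blast
qed

lemma cj_typing_subst_under_binder_inv:
  assumes "\<And>\<Gamma> \<tau>. cj_typing \<Gamma> (subst t (Suc k) (lift 0 s)) \<tau> \<Longrightarrow>
      \<exists>M \<Gamma>' \<Delta>. cj_typing (env_ins (Suc k) M \<Gamma>') t \<tau> \<and> cj_mtyping0 \<Delta> (lift 0 s) M \<and> \<Gamma> = env_union \<Gamma>' \<Delta>"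
    and "cj_typing (env_ext N \<Gamma>) (subst t (Suc k) (lift 0 s)) \<tau>"
  shows "\<exists>M \<Gamma>' \<Delta>. cj_typing (env_ext N (env_ins k M \<Gamma>')) t \<tau> \<and> cj_mtyping0 \<Delta> s M \<and> \<Gamma> = env_union \<Gamma>' \<Delta>"
proof -
  from assms obtain M \<Gamma>' \<Delta> where
    t: "cj_typing (env_ins (Suc k) M \<Gamma>') t \<tau>"
    and s: "cj_mtyping0 \<Delta> (lift 0 s) M"
    and env: "env_ext N \<Gamma> = env_union \<Gamma>' \<Delta>"
    by blast
  from cj_mtyping0_lift0_inv[OF s] have "\<Delta> 0 = {#}" and s': "cj_mtyping0 (\<Delta> \<circ> Suc) s M"
    by auto
  with env_ext_eq_env_unionD[OF env] have "N = \<Gamma>' 0" and "\<Gamma> = env_union (\<Gamma>' \<circ> Suc) (\<Delta> \<circ> Suc)"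
    by auto
  with t s' show ?thesis
    by (auto simp: env_ins_Suc)
qed

lemma cj_typing_subst_inv:
  "cj_typing \<Gamma> (subst t k s) \<tau> \<Longrightarrow>
    \<exists>M \<Gamma>' \<Delta>. cj_typing (env_ins k M \<Gamma>') t \<tau> \<and> cj_mtyping0 \<Delta> s M \<and> \<Gamma> = env_union \<Gamma>' \<Delta>"
proof (induction t arbitrary: \<Gamma> k s \<tau>)
  case (Var i)
  show ?case
  proof (cases "i = k")
    case True
    with Var have "cj_mtyping0 \<Gamma> s {#\<tau>#}"
      by (simp add: cj_mtyping0_def cj_mtyping_single)
    moreover have "env_ins k {#\<tau>#} (\<lambda>_. {#}) = env_single i \<tau>"
      using True by (auto simp: env_ins_def env_single_def)
    moreover have "\<Gamma> = env_union (\<lambda>_. {#}) \<Gamma>"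
      by (simp add: env_union_def)
    ultimately show ?thesis
      by (metis T_var)
  next
    case False
    with Var have "env_ins k {#} \<Gamma> = env_single i \<tau>"
      by (auto simp: cj_typing_Var_iff env_ins_def env_single_def fun_eq_iff split: if_splits)
    moreover have "\<Gamma> = env_union \<Gamma> (\<lambda>_. {#})"
      by (simp add: env_union_def)
    ultimately show ?thesis
      by (metis T_var cj_mtyping0_empty)
  qed
next
  case (Lam t)
  from Lam.prems obtain N \<sigma> where
    "\<tau> = Arr N \<sigma>" and "cj_typing (env_ext N \<Gamma>) (subst t (Suc k) (lift 0 s)) \<sigma>"
    by (auto elim: cj_typing_LamE)
  with cj_typing_subst_under_binder_inv[OF Lam.IH] show ?case
    by (blast intro: T_abs)
next
  case (App a b c)
  from App.prems obtain \<Gamma>a \<Gamma>b \<Lambda> ps \<tau>0 \<tau>1 where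
    \<Gamma>: "\<Gamma> = env_union \<Gamma>a (env_union \<Gamma>b \<Lambda>)"
    and "cj_mtyping \<Gamma>a (subst a k s) (ch (mset (map (\<lambda>(M, \<tau>). Arr M \<tau>) ps)) \<tau>0)"
    and "cj_mtyping \<Gamma>b (subst b k s) (ch (sum_list (map fst ps)) \<tau>1)"
    and "cj_typing (env_ext (mset (map snd ps)) \<Lambda>) (subst c (Suc k) (lift 0 s)) \<tau>"
    by (auto elim: cj_typing_AppE)
  note a_inv = cj_mtyping_subst_inv_of_typing[OF App.IH(1) this(2)]
    and b_inv = cj_mtyping_subst_inv_of_typing[OF App.IH(2) this(3)]
    and c_inv = cj_typing_subst_under_binder_inv[OF App.IH(3) this(4)]
  from a_inv obtain Ma \<Gamma>a' \<Delta>a where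
    a: "cj_mtyping (env_ins k Ma \<Gamma>a') a (ch (mset (map (\<lambda>(M, \<tau>). Arr M \<tau>) ps)) \<tau>0)"
    and sa: "cj_mtyping0 \<Delta>a s Ma" and \<Gamma>a: "\<Gamma>a = env_union \<Gamma>a' \<Delta>a"
    by blast
  from b_inv obtain Mb \<Gamma>b' \<Delta>b where
    b: "cj_mtyping (env_ins k Mb \<Gamma>b') b (ch (sum_list (map fst ps)) \<tau>1)"
    and sb: "cj_mtyping0 \<Delta>b s Mb" and \<Gamma>b: "\<Gamma>b = env_union \<Gamma>b' \<Delta>b"
    by blast
  from c_inv obtain Mc \<Lambda>' \<Delta>c where
    c: "cj_typing (env_ext (mset (map snd ps)) (env_ins k Mc \<Lambda>')) c \<tau>"
    and sc: "cj_mtyping0 \<Delta>c s Mc" and \<Lambda>: "\<Lambda> = env_union \<Lambda>' \<Delta>c"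
    by blast
  from T_app[OF a b c]
  have "cj_typing (env_ins k (Ma + (Mb + Mc)) (env_union \<Gamma>a' (env_union \<Gamma>b' \<Lambda>'))) (App a b c) \<tau>"
    by (simp add: env_ins_union)
  moreover have "cj_mtyping0 (env_union \<Delta>a (env_union \<Delta>b \<Delta>c)) s (Ma + (Mb + Mc))"
    using sa sb sc by (intro cj_mtyping0_union)
  moreover have "\<Gamma> = env_union (env_union \<Gamma>a' (env_union \<Gamma>b' \<Lambda>')) (env_union \<Delta>a (env_union \<Delta>b \<Delta>c))"
    using \<Gamma> \<Gamma>a \<Gamma>b \<Lambda> by (simp add: env_union_def fun_eq_iff add_ac)
  ultimately show ?case
    by blast
qed

lemma cj_typing_subst_loose_inv:
  assumes "loose k t" and "cj_typing \<Gamma> (subst t k s) \<tau>"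
  shows "\<exists>M \<Gamma>' \<Delta>. cj_typing (env_ins k M \<Gamma>') t \<tau> \<and> cj_mtyping \<Delta> s M \<and> \<Gamma> = env_union \<Gamma>' \<Delta>"
proof -
  from cj_typing_subst_inv[OF assms(2)] obtain M \<Gamma>' \<Delta> where
    "cj_typing (env_ins k M \<Gamma>') t \<tau>" "cj_mtyping0 \<Delta> s M" "\<Gamma> = env_union \<Gamma>' \<Delta>"
    by blast
  moreover from cj_typing_loose_nonempty[OF this(1) assms(1)] have "M \<noteq> {#}"
    by (simp add: env_ins_def)
  ultimately show ?thesis
    by (auto simp: cj_mtyping0_def)
qed

subsection \<open>Expansion of a root step\<close>

lemma liftn_Suc: "liftn (Suc d) v = liftn d (lift 0 v)"
  by (simp add: liftn_def funpow_swap1)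

lemma cj_typing_plug_subst_inv:
  assumes "loose 0 t" and "cj_typing \<Gamma> (plug D (subst t 0 (liftn (depth D) v))) \<tau>"
  shows "\<exists>M \<Gamma>' \<Delta>. cj_typing \<Gamma>' (plug D (Lam t)) (Arr M \<tau>) \<and> cj_mtyping \<Delta> v M \<and> \<Gamma> = env_union \<Gamma>' \<Delta>"
  using assms(2)
proof (induction D arbitrary: \<Gamma> \<tau> v)
  case Hole
  then have "cj_typing \<Gamma> (subst t 0 v) \<tau>"
    by (simp add: liftn_def)
  from cj_typing_subst_loose_inv[OF assms(1) this] show ?case
    unfolding env_ins_0 plug.simps by (blast intro: T_abs)
next
  case (DApp a b D)
  from DApp.prems obtain \<Gamma>a \<Gamma>b \<Lambda> ps \<tau>0 \<tau>1 where
    \<Gamma>: "\<Gamma> = env_union \<Gamma>a (env_union \<Gamma>b \<Lambda>)"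
    and a: "cj_mtyping \<Gamma>a a (ch (mset (map (\<lambda>(M, \<tau>). Arr M \<tau>) ps)) \<tau>0)"
    and b: "cj_mtyping \<Gamma>b b (ch (sum_list (map fst ps)) \<tau>1)"
    and "cj_typing (env_ext (mset (map snd ps)) \<Lambda>) (plug D (subst t 0 (liftn (depth D) (lift 0 v)))) \<tau>"
    by (auto elim: cj_typing_AppE simp: liftn_Suc)
  from DApp.IH[OF this(4)] obtain M \<Lambda>' \<Delta> where
    D: "cj_typing \<Lambda>' (plug D (Lam t)) (Arr M \<tau>)"
    and v: "cj_mtyping \<Delta> (lift 0 v) M"
    and env: "env_ext (mset (map snd ps)) \<Lambda> = env_union \<Lambda>' \<Delta>"
    by blast
  from cj_mtyping_lift_inv[OF v] have "\<Delta> 0 = {#}" and v': "cj_mtyping (\<Delta> \<circ> Suc) v M"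
    by (auto simp: env_drop_0)
  with env_ext_eq_env_unionD[OF env]
  have "\<Lambda>' = env_ext (mset (map snd ps)) (\<Lambda>' \<circ> Suc)" and \<Lambda>: "\<Lambda> = env_union (\<Lambda>' \<circ> Suc) (\<Delta> \<circ> Suc)"
    by (simp_all add: env_ext_eta)
  with D have "cj_typing (env_ext (mset (map snd ps)) (\<Lambda>' \<circ> Suc)) (plug D (Lam t)) (Arr M \<tau>)"
    by simp
  from T_app[OF a b this]
  have "cj_typing (env_union \<Gamma>a (env_union \<Gamma>b (\<Lambda>' \<circ> Suc))) (plug (DApp a b D) (Lam t)) (Arr M \<tau>)"
    by simp
  moreover have "\<Gamma> = env_union (env_union \<Gamma>a (env_union \<Gamma>b (\<Lambda>' \<circ> Suc))) (\<Delta> \<circ> Suc)"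
    using \<Gamma> \<Lambda> by (simp add: env_union_def fun_eq_iff add_ac)
  ultimately show ?case
    using v' by blast
qed

lemma cj_mtyping_arrow_split:
  assumes "\<And>\<Gamma> \<tau>. cj_typing \<Gamma> s \<tau> \<Longrightarrow>
      \<exists>M \<Gamma>' \<Delta>. cj_typing \<Gamma>' f (Arr M \<tau>) \<and> cj_mtyping \<Delta> v M \<and> \<Gamma> = env_union \<Gamma>' \<Delta>"
    and "cj_mtyping \<Gamma> s N"
  shows "\<exists>ps \<Gamma>' \<Delta>. mset (map snd ps) = N \<and> cj_mtyping \<Gamma>' f (mset (map (\<lambda>(M, \<tau>). Arr M \<tau>) ps))
    \<and> cj_mtyping \<Delta> v (sum_list (map fst ps)) \<and> \<Gamma> = env_union \<Gamma>' \<Delta>"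
  using assms(2)
proof (induction rule: cj_mtyping_induct)
  case (single \<Gamma> \<tau>)
  then obtain M \<Gamma>' \<Delta> where "cj_typing \<Gamma>' f (Arr M \<tau>)" "cj_mtyping \<Delta> v M" "\<Gamma> = env_union \<Gamma>' \<Delta>"
    using assms(1) by blast
  then show ?case
    by (intro exI[of _ "[(M, \<tau>)]"]) (auto intro: cj_mtyping_single)
next
  case (union \<Gamma>1 \<Gamma>2 N1 N2)
  then obtain ps1 \<Gamma>1' \<Delta>1 ps2 \<Gamma>2' \<Delta>2 where
    "mset (map snd ps1) = N1" "cj_mtyping \<Gamma>1' f (mset (map (\<lambda>(M, \<tau>). Arr M \<tau>) ps1))"
    "cj_mtyping \<Delta>1 v (sum_list (map fst ps1))" "\<Gamma>1 = env_union \<Gamma>1' \<Delta>1" and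
    "mset (map snd ps2) = N2" "cj_mtyping \<Gamma>2' f (mset (map (\<lambda>(M, \<tau>). Arr M \<tau>) ps2))"
    "cj_mtyping \<Delta>2 v (sum_list (map fst ps2))" "\<Gamma>2 = env_union \<Gamma>2' \<Delta>2"
    by blast
  then have "mset (map snd (ps1 @ ps2)) = N1 + N2"
    and "cj_mtyping (env_union \<Gamma>1' \<Gamma>2') f (mset (map (\<lambda>(M, \<tau>). Arr M \<tau>) (ps1 @ ps2)))"
    and "cj_mtyping (env_union \<Delta>1 \<Delta>2) v (sum_list (map fst (ps1 @ ps2)))"
    by (simp_all add: cj_mtyping_union)
  moreover have "env_union \<Gamma>1 \<Gamma>2 = env_union (env_union \<Gamma>1' \<Gamma>2') (env_union \<Delta>1 \<Delta>2)"
    using \<open>\<Gamma>1 = _\<close> \<open>\<Gamma>2 = _\<close> by (simp add: env_union_def fun_eq_iff add_ac)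
  ultimately show ?case
    by blast
qed

lemma cj_typing_App_intro:
  assumes "cj_mtyping \<Gamma> t (mset (map (\<lambda>(M, \<tau>). Arr M \<tau>) ps))"
    and "cj_mtyping \<Delta> u (sum_list (map fst ps))"
    and "cj_typing (env_ext (mset (map snd ps)) \<Lambda>) r \<sigma>"
  shows "cj_typing (env_union \<Gamma> (env_union \<Delta> \<Lambda>)) (App t u r) \<sigma>"
proof -
  have "ch (mset (map (\<lambda>(M, \<tau>). Arr M \<tau>) ps)) \<tau> = mset (map (\<lambda>(M, \<tau>). Arr M \<tau>) ps)"
    and "ch (sum_list (map fst ps)) \<tau> = sum_list (map fst ps)" for \<tau>
    using cj_mtyping_nonempty[OF assms(1)] cj_mtyping_nonempty[OF assms(2)] by (simp_all add: ch_def)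
  with T_app[of \<Gamma> t ps _ \<Delta> u _ \<Lambda> r \<sigma>] assms show ?thesis
    by simp
qed

lemma cj_typing_root_expand:
  assumes "loose 0 t" and "loose 0 r"
    and "cj_typing \<Gamma> (subst r 0 (plug D (subst t 0 (liftn (depth D) u)))) \<sigma>"
  shows "cj_typing \<Gamma> (App (plug D (Lam t)) u r) \<sigma>"
proof -
  from cj_typing_subst_loose_inv[OF assms(2,3)] obtain N \<Lambda> \<Delta> where
    r: "cj_typing (env_ext N \<Lambda>) r \<sigma>"
    and "cj_mtyping \<Delta> (plug D (subst t 0 (liftn (depth D) u))) N"
    and \<Gamma>: "\<Gamma> = env_union \<Lambda> \<Delta>"
    by (auto simp: env_ins_0)
  from cj_mtyping_arrow_split[OF cj_typing_plug_subst_inv[OF assms(1)] this(2)]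
  obtain ps \<Gamma>' \<Delta>' where
    "mset (map snd ps) = N"
    and "cj_mtyping \<Gamma>' (plug D (Lam t)) (mset (map (\<lambda>(M, \<tau>). Arr M \<tau>) ps))"
    and "cj_mtyping \<Delta>' u (sum_list (map fst ps))"
    and \<Delta>: "\<Delta> = env_union \<Gamma>' \<Delta>'"
    by blast
  with r have "cj_typing (env_union \<Gamma>' (env_union \<Delta>' \<Lambda>)) (App (plug D (Lam t)) u r) \<sigma>"
    by (auto intro: cj_typing_App_intro)
  moreover have "\<Gamma> = env_union \<Gamma>' (env_union \<Delta>' \<Lambda>)"
    using \<Gamma> \<Delta> by (simp add: env_union_def fun_eq_iff add_ac)
  ultimately show ?thesis
    by simp
qed

lemma cj_typing_Lam_expand:
  assumes "\<And>\<Gamma> \<sigma>. cj_typing \<Gamma> t' \<sigma> \<Longrightarrow> cj_typing \<Gamma> t \<sigma>" and "cj_typing \<Gamma> (Lam t') \<sigma>"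
  shows "cj_typing \<Gamma> (Lam t) \<sigma>"
  using assms(2) by (auto elim!: cj_typing_LamE intro: T_abs assms(1))

lemma cj_typing_App_expand:
  assumes "\<And>\<Gamma> \<sigma>. cj_typing \<Gamma> t' \<sigma> \<Longrightarrow> cj_typing \<Gamma> t \<sigma>"
    and "\<And>\<Gamma> \<sigma>. cj_typing \<Gamma> u' \<sigma> \<Longrightarrow> cj_typing \<Gamma> u \<sigma>"
    and "\<And>\<Gamma> \<sigma>. cj_typing \<Gamma> r' \<sigma> \<Longrightarrow> cj_typing \<Gamma> r \<sigma>"
    and "cj_typing \<Gamma> (App t' u' r') \<sigma>"
  shows "cj_typing \<Gamma> (App t u r) \<sigma>"
  using assms(4)
  by (auto elim!: cj_typing_AppE intro!: T_app cj_mtyping_transfer[OF assms(1)]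
      cj_mtyping_transfer[OF assms(2)] assms(3))

theorem mainTheorem11:
  assumes "cj_typing \<Gamma> t2 \<sigma>"
    and "ne_dbeta t1 t2"
  shows "cj_typing \<Gamma> t1 \<sigma>"
  using assms(2,1)
proof (induction arbitrary: \<Gamma> \<sigma> rule: ne_dbeta.induct)
  case (root t r D u)
  then show ?case by (rule cj_typing_root_expand)
next
  case (lam t t')
  then show ?case by (blast intro: cj_typing_Lam_expand)
next
  case (app1 t t' u r)
  then show ?case by (blast intro: cj_typing_App_expand)
next
  case (app2 u u' t r)
  then show ?case by (blast intro: cj_typing_App_expand)
next
  case (app3 r r' t u)
  then show ?case by (blast intro: cj_typing_App_expand)
qed

end
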